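(* Let $\Gamma$ be a weak generalised hexagon of order $(s,t)$ and let $\mathcal{S}$ be a set of mutually opposite lines of $\Gamma$. Then $|\mathcal{S}|\le st^2+1$.
   Context: A weak generalised hexagon is a point-line geometry with no ordinary $k$-gons for $2\le k<6$ in which any two elements lie in a common ordinary hexagon; order $(s,t)$ means every line has $s+1$ points and every point is on $t+1$ lines. Distance is measured in the incidence graph; two lines are opposite if they are at distance $6$. *)

theory Defs
  imports Main
begin

definition inc_adj :: "'p set \<Rightarrow> 'l set \<Rightarrow> ('p \<Rightarrow> 'l \<Rightarrow> bool) \<Rightarrow> ('p + 'l) \<Rightarrow> ('p + 'l) \<Rightarrow> bool" where
  "inc_adj P L I u v = (case (u, v) of
      (Inl p, Inr l) \<Rightarrow> p \<in> P \<and> l \<in> L \<and> I p l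
    | (Inr l, Inl p) \<Rightarrow> p \<in> P \<and> l \<in> L \<and> I p l
    | _ \<Rightarrow> False)"

definition elements :: "'p set \<Rightarrow> 'l set \<Rightarrow> ('p + 'l) set" where
  "elements P L = Inl ` P \<union> Inr ` L"

definition is_walk :: "('v \<Rightarrow> 'v \<Rightarrow> bool) \<Rightarrow> 'v list \<Rightarrow> bool" where
  "is_walk adj xs = (xs \<noteq> [] \<and> (\<forall>i. Suc i < length xs \<longrightarrow> adj (xs ! i) (xs ! Suc i)))"

definition inc_dist :: "'p set \<Rightarrow> 'l set \<Rightarrow> ('p \<Rightarrow> 'l \<Rightarrow> bool) \<Rightarrow> ('p + 'l) \<Rightarrow> ('p + 'l) \<Rightarrow> nat" where
  "inc_dist P L I x y = (LEAST n. \<exists>xs. is_walk (inc_adj P L I) xs \<and> hd xs = x \<and> last xs = y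
                                      \<and> length xs = Suc n)"

definition ordinary_gon :: "'p set \<Rightarrow> 'l set \<Rightarrow> ('p \<Rightarrow> 'l \<Rightarrow> bool) \<Rightarrow> nat \<Rightarrow> ('p + 'l) list \<Rightarrow> bool" where
  "ordinary_gon P L I k xs = (length xs = 2 * k \<and> distinct xs \<and>
      (\<forall>i < 2 * k. inc_adj P L I (xs ! i) (xs ! ((i + 1) mod (2 * k)))))"

definition weak_gen_hexagon :: "'p set \<Rightarrow> 'l set \<Rightarrow> ('p \<Rightarrow> 'l \<Rightarrow> bool) \<Rightarrow> bool" where
  "weak_gen_hexagon P L I =
     ((\<forall>k xs. 2 \<le> k \<and> k < 6 \<longrightarrow> \<not> ordinary_gon P L I k xs) \<and>
      (\<forall>x \<in> elements P L. \<forall>y \<in> elements P L.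
          \<exists>xs. ordinary_gon P L I 6 xs \<and> x \<in> set xs \<and> y \<in> set xs))"

definition has_order :: "'p set \<Rightarrow> 'l set \<Rightarrow> ('p \<Rightarrow> 'l \<Rightarrow> bool) \<Rightarrow> nat \<Rightarrow> nat \<Rightarrow> bool" where
  "has_order P L I s t =
     ((\<forall>l \<in> L. card {p \<in> P. I p l} = s + 1) \<and> (\<forall>p \<in> P. card {l \<in> L. I p l} = t + 1))"

definition opposite_lines :: "'p set \<Rightarrow> 'l set \<Rightarrow> ('p \<Rightarrow> 'l \<Rightarrow> bool) \<Rightarrow> 'l \<Rightarrow> 'l \<Rightarrow> bool" where
  "opposite_lines P L I l m = (inc_dist P L I (Inr l) (Inr m) = 6)"

end

theory Submission imports Defs begin

text \<open>Fix a line \<open>l \<in> S\<close> and a point \<open>p\<close> on it. Every further line \<open>m \<in> S\<close> is opposite \<open>l\<close>,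
so \<open>p\<close> lies at distance 5 from \<open>m\<close>, on a path \<open>p, l\<^sub>1, q, l\<^sub>2, r, m\<close> with \<open>l\<^sub>1 \<noteq> l\<close>, \<open>q \<noteq> p\<close>
and \<open>l\<^sub>2 \<noteq> l\<^sub>1\<close>. There are at most \<open>t \<cdot> s \<cdot> t\<close> choices for \<open>l\<^sub>2\<close>, and no \<open>l\<^sub>2\<close> serves two
members of \<open>S\<close>: two lines meeting a common line are at distance at most 4. Hence
\<open>|S| - 1 \<le> s t\<^sup>2\<close>.\<close>

lemma is_walk_single [simp]: "is_walk adj [a]"
  by (simp add: is_walk_def)

lemma is_walk_Cons2 [simp]: "is_walk adj (a # b # xs) \<longleftrightarrow> adj a b \<and> is_walk adj (b # xs)"
  by (auto simp: is_walk_def less_Suc_eq_0_disj)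

lemma inc_adj_simps [simp]:
  "inc_adj P L I (Inl p) (Inr l) \<longleftrightarrow> p \<in> P \<and> l \<in> L \<and> I p l"
  "inc_adj P L I (Inr l) (Inl p) \<longleftrightarrow> p \<in> P \<and> l \<in> L \<and> I p l"
  "\<not> inc_adj P L I (Inl p) (Inl q)"
  "\<not> inc_adj P L I (Inr l) (Inr m)"
  by (simp_all add: inc_adj_def)

lemma inc_adj_commute: "inc_adj P L I u v = inc_adj P L I v u"
  by (cases u; cases v) auto

lemma inc_adj_isl_neq: "inc_adj P L I u v \<Longrightarrow> isl u \<noteq> isl v"
  by (cases u; cases v) auto

lemma is_walk_isl_nth:
  assumes "is_walk (inc_adj P L I) xs" "i < length xs"
  shows "isl (xs ! i) \<longleftrightarrow> (isl (xs ! 0) \<longleftrightarrow> even i)"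
  using assms(2)
proof (induction i)
  case (Suc i)
  then have "inc_adj P L I (xs ! i) (xs ! Suc i)"
    using assms(1) unfolding is_walk_def by blast
  with Suc show ?case by (auto dest: inc_adj_isl_neq)
qed simp

lemma is_walk_rev:
  assumes "is_walk (inc_adj P L I) xs"
  shows "is_walk (inc_adj P L I) (rev xs)"
  unfolding is_walk_def
proof (intro conjI allI impI)
  show "rev xs \<noteq> []" using assms by (simp add: is_walk_def)
  fix i assume i: "Suc i < length (rev xs)"
  define j where "j = length xs - Suc (Suc i)"
  have "Suc j < length xs" using i j_def by auto
  then have "inc_adj P L I (xs ! j) (xs ! Suc j)" using assms unfolding is_walk_def by blast
  moreover have "rev xs ! i = xs ! Suc j" "rev xs ! Suc i = xs ! j"
    using i j_def by (auto simp: rev_nth Suc_diff_Suc)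
  ultimately show "inc_adj P L I (rev xs ! i) (rev xs ! Suc i)" by (simp add: inc_adj_commute)
qed

lemma inc_dist_le_walk:
  assumes "is_walk (inc_adj P L I) xs" "hd xs = x" "last xs = y" "length xs = Suc n"
  shows "inc_dist P L I x y \<le> n"
  unfolding inc_dist_def by (rule Least_le) (use assms in blast)

lemma not_opposite_lines_if_path4:
  assumes "l \<in> L" "m \<in> L" "x \<in> P" "I x l" "k \<in> L" "I x k" "y \<in> P" "I y k" "I y m"
  shows "\<not> opposite_lines P L I l m"
proof -
  have "inc_dist P L I (Inr l) (Inr m) \<le> 4"
    by (rule inc_dist_le_walk[of P L I "[Inr l, Inl x, Inr k, Inl y, Inr m]"]) (use assms in auto)
  then show ?thesis unfolding opposite_lines_def by simp
qed

lemma ordinary_gon_walk: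
  assumes "ordinary_gon P L I k xs" "0 < k"
  shows "is_walk (inc_adj P L I) (map (\<lambda>m. xs ! ((i + m) mod (2 * k))) [0..<Suc d])"
  unfolding is_walk_def
proof (intro conjI allI impI)
  fix m assume m: "Suc m < length (map (\<lambda>m. xs ! ((i + m) mod (2 * k))) [0..<Suc d])"
  have "inc_adj P L I (xs ! ((i + m) mod (2 * k))) (xs ! (((i + m) mod (2 * k) + 1) mod (2 * k)))"
    using assms unfolding ordinary_gon_def by simp
  moreover have "((i + m) mod (2 * k) + 1) mod (2 * k) = (i + Suc m) mod (2 * k)"
    by (simp add: mod_Suc_eq)
  ultimately show "inc_adj P L I (map (\<lambda>m. xs ! ((i + m) mod (2 * k))) [0..<Suc d] ! m)
      (map (\<lambda>m. xs ! ((i + m) mod (2 * k))) [0..<Suc d] ! Suc m)"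
    using m by (simp del: upt_Suc)
qed simp

text \<open>Walking around the polygon in the shorter of the two directions.\<close>
lemma ordinary_gon_walk_between_le:
  assumes gon: "ordinary_gon P L I k xs" and ij: "i \<le> j" "j < 2 * k"
  shows "\<exists>w. is_walk (inc_adj P L I) w \<and> hd w = xs ! i \<and> last w = xs ! j \<and> length w \<le> Suc k"
proof -
  let ?w = "\<lambda>i d. map (\<lambda>m. xs ! ((i + m) mod (2 * k))) [0..<Suc d]"
  have walk: "is_walk (inc_adj P L I) (?w i d)" for i d
    by (rule ordinary_gon_walk[OF gon]) (use ij in simp)
  have ends: "hd (?w i d) = xs ! (i mod (2 * k))" "last (?w i d) = xs ! ((i + d) mod (2 * k))"
    "length (?w i d) = Suc d" for i d
    by (simp_all add: hd_map last_map del: upt_Suc)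
  show ?thesis
  proof (cases "j - i \<le> k")
    case True
    then show ?thesis
      using walk ends[of i "j - i"] ij by (intro exI[of _ "?w i (j - i)"]) (simp del: upt_Suc)
  next
    case False
    have "j + (i + 2 * k - j) = i + 2 * k" using ij by simp
    then have "(j + (i + 2 * k - j)) mod (2 * k) = i" using ij by simp
    moreover have "?w j (i + 2 * k - j) \<noteq> []" by (simp del: upt_Suc)
    ultimately show ?thesis
      using is_walk_rev[OF walk] ends[of j "i + 2 * k - j"] ij False
      by (intro exI[of _ "rev (?w j (i + 2 * k - j))"]) (simp add: hd_rev last_rev del: upt_Suc)
  qed
qed

lemma ordinary_gon_walk_between:
  assumes gon: "ordinary_gon P L I k xs" and "x \<in> set xs" "y \<in> set xs"
  shows "\<exists>w. is_walk (inc_adj P L I) w \<and> hd w = x \<and> last w = y \<and> length w \<le> Suc k"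
proof -
  have len: "length xs = 2 * k" using gon by (simp add: ordinary_gon_def)
  obtain i j where ij: "i < 2 * k" "x = xs ! i" "j < 2 * k" "y = xs ! j"
    using assms(2,3) len by (auto simp: in_set_conv_nth)
  show ?thesis
  proof (cases "i \<le> j")
    case True
    then show ?thesis using ordinary_gon_walk_between_le[OF gon] ij by blast
  next
    case False
    then obtain w where w: "is_walk (inc_adj P L I) w" "hd w = y" "last w = x" "length w \<le> Suc k"
      using ordinary_gon_walk_between_le[OF gon, of j i] ij by auto
    then have "w \<noteq> []" by (simp add: is_walk_def)
    with w show ?thesis by (intro exI[of _ "rev w"]) (auto simp: is_walk_rev hd_rev last_rev)
  qed
qed

lemma weak_gen_hexagon_walk_between:
  assumes "weak_gen_hexagon P L I" "x \<in> elements P L" "y \<in> elements P L"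
  shows "\<exists>w. is_walk (inc_adj P L I) w \<and> hd w = x \<and> last w = y \<and> length w \<le> 7"
proof -
  obtain xs where "ordinary_gon P L I 6 xs" "x \<in> set xs" "y \<in> set xs"
    using assms unfolding weak_gen_hexagon_def by blast
  then show ?thesis using ordinary_gon_walk_between by fastforce
qed

definition path4_lines :: "'p set \<Rightarrow> 'l set \<Rightarrow> ('p \<Rightarrow> 'l \<Rightarrow> bool) \<Rightarrow> 'p \<Rightarrow> 'l \<Rightarrow> 'l set" where
  "path4_lines P L I p l =
     (\<Union>l1 \<in> {l1 \<in> L. I p l1} - {l}. \<Union>q \<in> {q \<in> P. I q l1} - {p}. {l2 \<in> L. I q l2} - {l1})"

lemma path4_lines_subset: "path4_lines P L I p l \<subseteq> L"
  by (auto simp: path4_lines_def)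

text \<open>A point \<open>p\<close> on \<open>l\<close> is at distance exactly 5 from a line \<open>m\<close> opposite \<open>l\<close>: at most 6 by
  the hexagon axiom, odd by bipartiteness, and at least 5 since prefixing \<open>l\<close> gives a walk from
  \<open>l\<close> to \<open>m\<close>. Any backtracking on such a path would give a walk of length 4 from \<open>l\<close> to \<open>m\<close>.\<close>
lemma opposite_line_meets_path4_line:
  assumes hex: "weak_gen_hexagon P L I" and opp: "opposite_lines P L I l m"
    and l: "l \<in> L" and m: "m \<in> L" and p: "p \<in> P" "I p l"
  shows "\<exists>l2 \<in> path4_lines P L I p l. \<exists>r \<in> P. I r l2 \<and> I r m"
proof -
  have "Inl p \<in> elements P L" "Inr m \<in> elements P L" using p m by (auto simp: elements_def)
  then obtain w where w: "is_walk (inc_adj P L I) w" "hd w = Inl p" "last w = Inr m" "length w \<le> 7"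
    using weak_gen_hexagon_walk_between[OF hex] by blast
  obtain w' where w': "w = Inl p # w'" using w(1,2) by (cases w) (auto simp: is_walk_def)
  define n where "n = length w'"
  have "isl (w ! n) \<longleftrightarrow> (isl (w ! 0) \<longleftrightarrow> even n)"
    using is_walk_isl_nth[OF w(1), of n] w' n_def by simp
  moreover have "w ! n = Inr m"
    using w(3) w' n_def last_conv_nth[of w] by (simp del: last.simps)
  ultimately have "odd n" using w' by simp
  have "is_walk (inc_adj P L I) (Inr l # w)" using w(1) w' l p by (cases w') auto
  then have "inc_dist P L I (Inr l) (Inr m) \<le> Suc n"
    by (rule inc_dist_le_walk) (use w w' n_def in auto)
  with opp have "6 \<le> Suc n" unfolding opposite_lines_def by simp
  moreover have "n \<le> 6" using w(4) w' n_def by simp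
  ultimately have "length w' = 5" using \<open>odd n\<close> n_def by presburger
  then obtain b c d e f where "w' = [b, c, d, e, f]"
    by (fastforce simp: length_Suc_conv numeral_eq_Suc)
  with w w' obtain l1 q l2 r where path: "l1 \<in> L" "I p l1" "q \<in> P" "I q l1" "l2 \<in> L" "I q l2"
      "r \<in> P" "I r l2" "I r m"
    by (cases b; cases c; cases d; cases e) auto
  have "l1 \<noteq> l" "q \<noteq> p" "l2 \<noteq> l1"
    using opp not_opposite_lines_if_path4[OF l m] path p by metis+
  with path show ?thesis unfolding path4_lines_def by blast
qed

lemma card_UN_le_mult:
  assumes "finite A" "\<And>a. a \<in> A \<Longrightarrow> card (F a) \<le> k"
  shows "card (\<Union>a\<in>A. F a) \<le> card A * k"
proof -
  have "card (\<Union>a\<in>A. F a) \<le> (\<Sum>a\<in>A. card (F a))" by (rule card_UN_le[OF assms(1)])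
  also have "\<dots> \<le> card A * k" using sum_bounded_above[of A "\<lambda>a. card (F a)" k] assms(2) by simp
  finally show ?thesis .
qed

lemma finite_if_inj_on_rel:
  assumes "finite B" "\<And>a. a \<in> A \<Longrightarrow> \<exists>b \<in> B. r a b"
    "\<And>a1 a2 b. a1 \<in> A \<Longrightarrow> a2 \<in> A \<Longrightarrow> b \<in> B \<Longrightarrow> r a1 b \<Longrightarrow> r a2 b \<Longrightarrow> a1 = a2"
  shows "finite A"
proof -
  have "finite {a \<in> A. r a b}" if "b \<in> B" for b
  proof (cases "\<exists>a \<in> A. r a b")
    case True
    then obtain a0 where "a0 \<in> A" "r a0 b" by blast
    with assms(3) that have "{a \<in> A. r a b} \<subseteq> {a0}" by blast
    then show ?thesis by (rule finite_subset) simp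
  next
    case False
    then have "{a \<in> A. r a b} = {}" by blast
    then show ?thesis by (metis finite.emptyI)
  qed
  moreover have "A \<subseteq> (\<Union>b\<in>B. {a \<in> A. r a b})" using assms(2) by blast
  ultimately show ?thesis using assms(1) by (meson finite_UN_I finite_subset)
qed

lemma has_order_finite:
  assumes "has_order P L I s t"
  shows "l \<in> L \<Longrightarrow> finite {p \<in> P. I p l}" and "p \<in> P \<Longrightarrow> finite {l \<in> L. I p l}"
  using assms unfolding has_order_def by (auto intro: card_ge_0_finite)

lemma has_order_finite_path4_lines:
  assumes "has_order P L I s t" "p \<in> P"
  shows "finite (path4_lines P L I p l)"
  using has_order_finite[OF assms(1)] assms(2) unfolding path4_lines_def by auto

lemma has_order_card_path4_lines:
  assumes ord: "has_order P L I s t" and "p \<in> P" "l \<in> L" "I p l"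
  shows "card (path4_lines P L I p l) \<le> s * t ^ 2"
proof -
  note fin = has_order_finite[OF ord]
  have card_lines: "card ({l1 \<in> L. I p l1} - {l}) = t"
    using ord assms(2-4) fin(2)[OF assms(2)] by (simp add: has_order_def)
  have card_points: "card ({q \<in> P. I q l1} - {p}) \<le> s" if "l1 \<in> L" "I p l1" for l1
    using ord that assms(2) by (simp add: has_order_def card_Diff_singleton_if)
  have card_lines_le: "card ({l2 \<in> L. I q l2} - {l1}) \<le> t" if "q \<in> P" "l1 \<in> L" "I q l1" for q l1
    using ord that by (simp add: has_order_def card_Diff_singleton_if)
  have "card (path4_lines P L I p l) \<le> card ({l1 \<in> L. I p l1} - {l}) * (s * t)"
    unfolding path4_lines_def
  proof (intro card_UN_le_mult)
    fix l1 assume l1: "l1 \<in> {l1 \<in> L. I p l1} - {l}"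
    have "card (\<Union>q \<in> {q \<in> P. I q l1} - {p}. {l2 \<in> L. I q l2} - {l1}) \<le> card ({q \<in> P. I q l1} - {p}) * t"
      using fin l1 card_lines_le by (intro card_UN_le_mult) auto
    also have "\<dots> \<le> s * t" using card_points l1 by simp
    finally show "card (\<Union>q \<in> {q \<in> P. I q l1} - {p}. {l2 \<in> L. I q l2} - {l1}) \<le> s * t" .
  qed (use fin assms(2) in simp)
  then show ?thesis by (simp add: card_lines power2_eq_square mult.left_commute)
qed

theorem mainTheorem4:
  fixes P :: "'p set" and L :: "'l set" and I :: "'p \<Rightarrow> 'l \<Rightarrow> bool" and s t :: nat
    and S :: "'l set"
  assumes "weak_gen_hexagon P L I"
    and "has_order P L I s t"
    and "S \<subseteq> L"
    and "\<forall>l \<in> S. \<forall>m \<in> S. l \<noteq> m \<longrightarrow> opposite_lines P L I l m"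
  shows "finite S \<and> card S \<le> s * t ^ 2 + 1"
proof (cases "S = {}")
  case False
  then obtain l where l: "l \<in> S" "l \<in> L" using assms(3) by blast
  with assms(2) have "card {p \<in> P. I p l} = s + 1" by (simp add: has_order_def)
  then have "{p \<in> P. I p l} \<noteq> {}" by force
  then obtain p where p: "p \<in> P" "I p l" by blast
  let ?meets = "\<lambda>m l2. \<exists>r \<in> P. I r l2 \<and> I r m"
  let ?T = "path4_lines P L I p l"
  have hits: "\<exists>l2 \<in> ?T. ?meets m l2" if m: "m \<in> S - {l}" for m
  proof (rule opposite_line_meets_path4_line[OF assms(1) _ l(2) _ p])
    show "opposite_lines P L I l m" by (rule assms(4)[rule_format, OF l(1)]) (use m in auto)
    show "m \<in> L" using assms(3) m by blast
  qed
  have unique: "m = m'"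
    if m: "m \<in> S - {l}" "m' \<in> S - {l}" and l2: "l2 \<in> ?T" "?meets m l2" "?meets m' l2"
    for m m' l2
  proof (rule ccontr)
    assume "m \<noteq> m'"
    moreover have "m \<in> S" "m' \<in> S" using m by simp_all
    ultimately have opp: "opposite_lines P L I m m'" using assms(4) by blast
    from l2(2) obtain r where r: "r \<in> P" "I r l2" "I r m" by blast
    from l2(3) obtain r' where r': "r' \<in> P" "I r' l2" "I r' m'" by blast
    have lines: "m \<in> L" "m' \<in> L" "l2 \<in> L"
      using m l2(1) assms(3) path4_lines_subset[of P L I p l] by auto
    show False using not_opposite_lines_if_path4[OF lines(1,2) r(1,3) lines(3) r(2) r'] opp by simp
  qed
  have finT: "finite ?T" by (rule has_order_finite_path4_lines[OF assms(2) p(1)])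
  have "finite (S - {l})" by (rule finite_if_inj_on_rel[OF finT hits unique])
  moreover have "card (S - {l}) \<le> card ?T"
    by (rule card_le_if_inj_on_rel[OF finT, where r = ?meets]) (use hits unique in blast)+
  moreover have "card ?T \<le> s * t ^ 2" by (rule has_order_card_path4_lines[OF assms(2) p(1) l(2) p(2)])
  ultimately show ?thesis using l(1) by (simp add: card_Diff_singleton)
qed simp

end
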